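(* Let $f:G\to H$ be a group homomorphism. Then $\mathrm{sec}(f)\leq \sigma(\mathfrak{L}(f))$, and equality holds whenever the poset $\mathfrak{L}(f)$ is Noetherian (for example, when $H$ is finite or, more generally, Noetherian).
   Context: For a subgroup $L\le H$, a local section of $f$ on $L$ is a homomorphism $s:L\to G$ with $f\circ s=\mathrm{incl}_L$. The sectional number $\mathrm{sec}(f)$ is the least positive integer $m$ such that there exist proper subgroups $H_1,\ldots,H_m$ of $H$ with $H=H_1\cup\cdots\cup H_m$ and such that $f$ admits a local section on each $H_i$; $\mathrm{sec}(f)=\infty$ if no such $m$ exists. $\mathfrak{L}(f)$ is the poset, ordered by inclusion, of all proper subgroups of $H$ on which $f$ admits a local section. For a poset $P$ whose elements are subsets of a fixed set $X$ (here $X=H$), $\sigma(P)$ is the least positive integer $m$ such that there exist maximal elements $M_1,\ldots,M_m$ of $P$ with $X=M_1\cup\cdots\cup M_m$ ($\infty$ if none). A poset is Noetherian if every ascending chain $x_1\le x_2\le\cdots$ eventually stabilizes. *)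

theory Defs
  imports "HOL-Algebra.Algebra" "HOL-Library.Extended_Nat"
begin

definition has_local_section ::
  "('a, 'c) monoid_scheme \<Rightarrow> ('b, 'd) monoid_scheme \<Rightarrow> ('a \<Rightarrow> 'b) \<Rightarrow> 'b set \<Rightarrow> bool" where
  "has_local_section G H f L \<longleftrightarrow>
     (\<exists>s. s \<in> hom (H\<lparr>carrier := L\<rparr>) G \<and> (\<forall>x\<in>L. f (s x) = x))"

(* sectional number sec(f); Inf of the empty set of enat is \<infinity> *)
definition sectional_number ::
  "('a, 'c) monoid_scheme \<Rightarrow> ('b, 'd) monoid_scheme \<Rightarrow> ('a \<Rightarrow> 'b) \<Rightarrow> enat" where
  "sectional_number G H f = Inf {enat m | m. 0 < m \<and>
     (\<exists>Hs :: nat \<Rightarrow> 'b set.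
        (\<forall>i<m. subgroup (Hs i) H \<and> Hs i \<noteq> carrier H \<and> has_local_section G H f (Hs i)) \<and>
        (\<Union>i<m. Hs i) = carrier H)}"

definition local_section_poset ::
  "('a, 'c) monoid_scheme \<Rightarrow> ('b, 'd) monoid_scheme \<Rightarrow> ('a \<Rightarrow> 'b) \<Rightarrow> 'b set set" where
  "local_section_poset G H f =
     {L. subgroup L H \<and> L \<noteq> carrier H \<and> has_local_section G H f L}"

definition maximal_in :: "'b set set \<Rightarrow> 'b set \<Rightarrow> bool" where
  "maximal_in P A \<longleftrightarrow> A \<in> P \<and> (\<forall>B\<in>P. A \<subseteq> B \<longrightarrow> B = A)"

definition sigma_cover :: "'b set \<Rightarrow> 'b set set \<Rightarrow> enat" where
  "sigma_cover U P = Inf {enat m | m. 0 < m \<and>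
     (\<exists>Ms :: nat \<Rightarrow> 'b set. (\<forall>i<m. maximal_in P (Ms i)) \<and> (\<Union>i<m. Ms i) = U)}"

definition noetherian_poset :: "'b set set \<Rightarrow> bool" where
  "noetherian_poset P \<longleftrightarrow>
     (\<forall>c :: nat \<Rightarrow> 'b set. (\<forall>n. c n \<in> P) \<and> (\<forall>n. c n \<subseteq> c (Suc n))
        \<longrightarrow> (\<exists>N. \<forall>n\<ge>N. c n = c N))"

end

theory Submission
  imports Defs
begin

text \<open>Both \<open>sec(f)\<close> and \<open>\<sigma>(L(f))\<close> are least sizes of covers of \<open>H\<close>, by arbitrary
  members of \<open>L(f)\<close> and by maximal ones respectively, so the inequality is immediate. When
  \<open>L(f)\<close> is Noetherian, every member lies in a maximal one; enlarging the members of a cover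
  gives a cover of the same size by maximal elements.\<close>

definition covering_number :: "'b set \<Rightarrow> 'b set set \<Rightarrow> enat" where
  "covering_number U P = Inf {enat m | m. 0 < m \<and>
     (\<exists>Ms :: nat \<Rightarrow> 'b set. (\<forall>i<m. Ms i \<in> P) \<and> (\<Union>i<m. Ms i) = U)}"

lemma sectional_number_eq_covering_number:
  "sectional_number G H f = covering_number (carrier H) (local_section_poset G H f)"
  unfolding sectional_number_def covering_number_def local_section_poset_def by simp

lemma sigma_cover_eq_covering_number:
  "sigma_cover U P = covering_number U {M. maximal_in P M}"
  unfolding sigma_cover_def covering_number_def by simp

lemma covering_number_antimono:
  assumes "Q \<subseteq> P"
  shows "covering_number U P \<le> covering_number U Q"
  unfolding covering_number_def
  by (rule Inf_superset_mono) (use assms in blast)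

lemma covering_number_maximal_le:
  assumes "P \<subseteq> Pow U" and "\<And>A. A \<in> P \<Longrightarrow> \<exists>M. maximal_in P M \<and> A \<subseteq> M"
  shows "covering_number U {M. maximal_in P M} \<le> covering_number U P"
  unfolding covering_number_def
proof (rule Inf_superset_mono, rule subsetI)
  fix x
  assume "x \<in> {enat m | m. 0 < m \<and> (\<exists>As. (\<forall>i<m. As i \<in> P) \<and> (\<Union>i<m. As i) = U)}"
  then obtain m As where x: "x = enat m" "0 < m"
    and As: "\<forall>i<m. As i \<in> P" and cover: "(\<Union>i<m. As i) = U"
    by blast
  define Ms where "Ms i = (SOME M. maximal_in P M \<and> As i \<subseteq> M)" for i
  have Ms: "maximal_in P (Ms i) \<and> As i \<subseteq> Ms i" if "i < m" for i
    unfolding Ms_def by (rule someI_ex) (use assms(2) As that in blast)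
  have "Ms i \<subseteq> U" if "i < m" for i
    using Ms[OF that] assms(1) unfolding maximal_in_def by blast
  with Ms cover have Ms_cover: "(\<Union>i<m. Ms i) = U" by blast
  have "\<forall>i<m. Ms i \<in> {M. maximal_in P M}" using Ms by blast
  with \<open>0 < m\<close> Ms_cover show "x \<in> {enat m | m. 0 < m \<and>
      (\<exists>Ms. (\<forall>i<m. Ms i \<in> {M. maximal_in P M}) \<and> (\<Union>i<m. Ms i) = U)}"
    unfolding x by auto
qed

lemma noetherian_poset_wf_strict_superset:
  assumes "noetherian_poset P"
  shows "wf {(B, C). C \<in> P \<and> B \<in> P \<and> C \<subset> B}"
  unfolding wf_iff_no_infinite_down_chain
proof
  assume "\<exists>c. \<forall>i. (c (Suc i), c i) \<in> {(B, C). C \<in> P \<and> B \<in> P \<and> C \<subset> B}"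
  then obtain c where chain: "\<And>i. c i \<in> P" "\<And>i. c i \<subset> c (Suc i)"
    by blast
  then have "\<forall>n. c n \<subseteq> c (Suc n)" by blast
  with chain(1) obtain N where "\<forall>n\<ge>N. c n = c N"
    using assms unfolding noetherian_poset_def by blast
  then have "c (Suc N) = c N" by (meson le_SucI order_refl)
  with chain(2) show False by (metis less_irrefl)
qed

lemma noetherian_poset_exists_maximal:
  assumes "noetherian_poset P" and "A \<in> P"
  shows "\<exists>M. maximal_in P M \<and> A \<subseteq> M"
proof -
  have "A \<in> {B \<in> P. A \<subseteq> B}" using assms(2) by simp
  then obtain M where M: "M \<in> {B \<in> P. A \<subseteq> B}"
    and top: "\<And>B. (B, M) \<in> {(B, C). C \<in> P \<and> B \<in> P \<and> C \<subset> B} \<Longrightarrow> B \<notin> {B \<in> P. A \<subseteq> B}"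
    by (rule wfE_min[OF noetherian_poset_wf_strict_superset[OF assms(1)]]) (rule that)
  have "maximal_in P M"
    unfolding maximal_in_def
  proof (intro conjI ballI impI)
    fix B assume "B \<in> P" "M \<subseteq> B"
    with M top[of B] show "B = M" by auto
  qed (use M in simp)
  with M show ?thesis by blast
qed

lemma local_section_poset_subset_Pow:
  "local_section_poset G H f \<subseteq> Pow (carrier H)"
  unfolding local_section_poset_def using subgroup.subset by blast

theorem theorem3p12:
  fixes G :: "('a, 'c) monoid_scheme" and H :: "('b, 'd) monoid_scheme" and f :: "'a \<Rightarrow> 'b"
  assumes "group G" and "group H" and "f \<in> hom G H"
  shows "sectional_number G H f \<le> sigma_cover (carrier H) (local_section_poset G H f) \<and>
         (noetherian_poset (local_section_poset G H f) \<longrightarrow>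
          sectional_number G H f = sigma_cover (carrier H) (local_section_poset G H f))"
proof -
  let ?P = "local_section_poset G H f"
  have "sectional_number G H f \<le> sigma_cover (carrier H) ?P"
    unfolding sectional_number_eq_covering_number sigma_cover_eq_covering_number
    by (rule covering_number_antimono) (auto simp: maximal_in_def)
  moreover have "sigma_cover (carrier H) ?P \<le> sectional_number G H f"
    if "noetherian_poset ?P"
    unfolding sectional_number_eq_covering_number sigma_cover_eq_covering_number
    using local_section_poset_subset_Pow noetherian_poset_exists_maximal[OF that]
    by (rule covering_number_maximal_le)
  ultimately show ?thesis by auto
qed

end
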